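(* Let $n\ge2$ be an integer and $\xi\in\mathbb{R}$. For every algebraic number $\alpha$ of degree $n$ with conjugates $\alpha_1,\dots,\alpha_n$, one has \[ \max_{1\le i\le n} |\xi-\alpha_i| \ge \tfrac12 H(\alpha)^{-2/n}. \]
   Context: The height $H(\alpha)$ of an algebraic number $\alpha\in\mathbb{C}$ is the largest absolute value of the coefficients of its irreducible (minimal) polynomial in $\mathbb{Z}[T]$. The conjugates of $\alpha$ are the roots of this polynomial. *)

theory Defs
  imports "HOL-Analysis.Analysis" "HOL-Computational_Algebra.Computational_Algebra"
begin

text \<open>The minimal polynomial of an algebraic number in Z[T]: the irreducible integer
  polynomial with positive leading coefficient having the number as a root
  (irreducible in Z[T] forces primitivity, so it is unique for algebraic numbers).\<close>
definition min_int_poly :: "complex \<Rightarrow> int poly" where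
  "min_int_poly \<alpha> = (THE p. irreducible p \<and> lead_coeff p > 0 \<and>
       poly (map_poly of_int p) \<alpha> = 0)"

definition alg_degree :: "complex \<Rightarrow> nat" where
  "alg_degree \<alpha> = degree (min_int_poly \<alpha>)"

definition height :: "complex \<Rightarrow> int" where
  "height \<alpha> = Max ((\<lambda>i. \<bar>coeff (min_int_poly \<alpha>) i\<bar>) ` {..degree (min_int_poly \<alpha>)})"

definition conjugates :: "complex \<Rightarrow> complex set" where
  "conjugates \<alpha> = {\<beta>. poly (map_poly of_int (min_int_poly \<alpha>)) \<beta> = 0}"

end

theory Submission
  imports Defs "Subresultants.Subresultant_Gcd"
begin

(* Idea: the resultant R = res(P, P') is a nonzero integer divisible by a, so |R| >= a.  On
   the other hand, over C one has R = a^(n-1) * prod_i P'(alpha_i) and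
   P'(alpha_i) = a * prod_{j <> i} (alpha_i - alpha_j); if every conjugate lies within delta of
   xi, each difference is at most 2 delta, whence |R| <= a^(2n-1) (2 delta)^(n(n-1)).
   Comparing both bounds gives a^(-2/n) <= 2 delta, and a <= H(alpha) finishes the proof. *)

lemma poly_complex_roots:
  fixes f :: "complex poly"
  shows "poly f x = lead_coeff f * (\<Prod>a\<in>#proots f. x - a)"
proof -
  have "poly f x = poly (Polynomial.smult (lead_coeff f) (\<Prod>a\<in>#proots f. [:-a, 1:])) x"
    by (simp only: complex_poly_decompose_multiset)
  also have "\<dots> = lead_coeff f * (\<Prod>a\<in>#proots f. x - a)"
    by (simp add: poly_prod_mset)
  finally show ?thesis .
qed

lemma pderiv_at_root:
  fixes f :: "complex poly"
  assumes "b \<in># proots f"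
  shows "poly (pderiv f) b = lead_coeff f * (\<Prod>a\<in>#proots f - {#b#}. b - a)"
proof -
  define Q where "Q = Polynomial.smult (lead_coeff f) (\<Prod>a\<in>#proots f - {#b#}. [:-a, 1:])"
  have "f = Polynomial.smult (lead_coeff f) (\<Prod>a\<in>#proots f. [:-a, 1:])"
    by (simp only: complex_poly_decompose_multiset)
  also have "proots f = add_mset b (proots f - {#b#})"
    using assms by simp
  finally have "f = [:-b, 1:] * Q"
    unfolding Q_def by (simp add: algebra_simps)
  then have "pderiv f = [:-b, 1:] * pderiv Q + Q * pderiv [:-b, 1:]"
    by (simp only: pderiv_mult)
  then have "poly (pderiv f) b = poly Q b"
    by (simp add: pderiv_pCons)
  then show ?thesis
    unfolding Q_def by (simp add: poly_prod_mset)
qed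

definition root_resultant :: "complex poly \<Rightarrow> complex poly \<Rightarrow> complex" where
  "root_resultant f g = lead_coeff f ^ degree g * (\<Prod>a\<in>#proots f. poly g a)"

lemma root_resultant_expand:
  "root_resultant f g = lead_coeff f ^ degree g * lead_coeff g ^ degree f *
     (\<Prod>a\<in>#proots f. \<Prod>b\<in>#proots g. a - b)"
  unfolding root_resultant_def poly_complex_roots[of g]
  by (simp add: prod_mset.distrib size_proots_complex)

lemma prod_mset_diff_flip:
  fixes A B :: "'a::comm_ring_1 multiset"
  shows "(\<Prod>a\<in>#A. \<Prod>b\<in>#B. a - b) =
           (-1) ^ (size A * size B) * (\<Prod>b\<in>#B. \<Prod>a\<in>#A. b - a)"
proof (induction A)
  case empty
  then show ?case by simp
next
  case (add x A)
  have flip_x: "(\<Prod>b\<in>#B. x - b) = (-1) ^ size B * (\<Prod>b\<in>#B. b - x)"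
    by (induction B) (simp_all add: algebra_simps)
  have "(\<Prod>b\<in>#B. \<Prod>a\<in>#add_mset x A. b - a) =
      (\<Prod>b\<in>#B. b - x) * (\<Prod>b\<in>#B. \<Prod>a\<in>#A. b - a)"
    by (simp add: prod_mset.distrib)
  then show ?case
    using add.IH flip_x by (simp add: power_add mult_ac)
qed

lemma neg_one_power_cancel: "(-1 :: 'a::comm_ring_1) ^ k * ((-1) ^ k * x) = x"
  by (simp flip: mult.assoc power_mult_distrib)

lemma root_resultant_swap:
  "root_resultant f g = (-1) ^ (degree f * degree g) * root_resultant g f"
  unfolding root_resultant_expand prod_mset_diff_flip[of "proots f"]
  by (simp add: size_proots_complex algebra_simps)

lemma root_resultant_cong_at_roots:
  assumes "\<And>a. a \<in># proots f \<Longrightarrow> poly g a = poly h a" and "degree h \<le> degree g"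
  shows "root_resultant f g = lead_coeff f ^ (degree g - degree h) * root_resultant f h"
proof -
  have "(\<Prod>a\<in>#proots f. poly g a) = (\<Prod>a\<in>#proots f. poly h a)"
    using assms(1) by (metis image_mset_cong)
  moreover have "lead_coeff f ^ degree g =
      lead_coeff f ^ (degree g - degree h) * lead_coeff f ^ degree h"
    using assms(2) by (simp flip: power_add)
  ultimately show ?thesis
    unfolding root_resultant_def by simp
qed

lemma degree_mod_le_dividend:
  fixes f g :: "'a::field poly"
  shows "degree (g mod f) \<le> degree g"
proof (cases "f = 0 \<or> g mod f = 0 \<or> degree g < degree f")
  case True
  then show ?thesis
    by (auto simp: mod_poly_less)
next
  case False
  then show ?thesis
    using degree_mod_less'[of f g] by linarith
qed

lemma root_resultant_mod:
  "root_resultant f g = lead_coeff f ^ (degree g - degree (g mod f)) * root_resultant f (g mod f)"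
proof (rule root_resultant_cong_at_roots)
  fix a assume "a \<in># proots f"
  then have "poly f a = 0" by (cases "f = 0") auto
  then show "poly g a = poly (g mod f) a"
    by (metis add_0 div_mult_mod_eq mult_zero_right poly_add poly_mult)
next
  show "degree (g mod f) \<le> degree g"
    by (rule degree_mod_le_dividend)
qed

lemma root_resultant_eq_0_if_common_root:
  assumes "f \<noteq> 0" "poly f a = 0" "poly g a = 0"
  shows "root_resultant f g = 0"
  using assms by (auto simp: root_resultant_def)

(* One step of the Euclidean algorithm for the Sylvester resultant, obtained from the
   Brown-Traub subresultant identities: it has exactly the same shape as root_resultant_mod. *)
lemma resultant_mod_step:
  fixes f g :: "'a::field poly"
  assumes "0 < degree g" and "degree g \<le> degree f"
  shows "resultant f g = (-1) ^ (degree f * degree g) *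
           lead_coeff g ^ (degree f - degree (f mod g)) * resultant g (f mod g)"
proof -
  define H where "H = f mod g"
  have FGH: "f + (- (f div g)) * g = H"
    unfolding H_def using div_mult_mod_eq[of f g] by (simp add: algebra_simps)
  have "g \<noteq> 0"
    using assms(1) by auto
  then have dH: "degree H < degree g"
    using degree_mod_less[of g f] assms(1) unfolding H_def by (cases "f mod g = 0") auto
  consider "H = 0" | "H \<noteq> 0" "degree H = 0" | "0 < degree H"
    by blast
  then have "resultant f g = (-1) ^ (degree f * degree g) *
      lead_coeff g ^ (degree f - degree H) * resultant g H"
  proof cases
    case 1 \<comment> \<open>g divides f, and both sides vanish\<close>
    then have "f = (f div g) * g"
      using FGH by (simp add: algebra_simps)
    from subresultant_product[OF this assms(2), of 0] assms(1)
    have "resultant f g = 0"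
      by (simp add: subresultant_resultant)
    with 1 assms(1) show ?thesis
      by simp
  next
    case 2
    then obtain h where Hh: "H = [:h:]"
      by (metis degree_eq_zeroE)
    have "subresultant (degree H) f g =
        Polynomial.smult ((-1) ^ ((degree f - degree H) * (degree g - degree H)) *
          lead_coeff g ^ (degree f - degree H) * lead_coeff H ^ (degree g - degree H - 1)) H"
      by (rule BT_lemma_1_13[OF FGH assms(2)]) (use dH in auto)
    then have "resultant f g = (-1) ^ (degree f * degree g) * lead_coeff g ^ degree f *
        (h ^ (degree g - 1) * h)"
      using 2 Hh by (simp add: subresultant_resultant algebra_simps)
    also have "h ^ (degree g - 1) * h = h ^ degree g"
      using assms(1) by (simp flip: power_Suc2)
    finally show ?thesis
      using 2 Hh by simp
  next
    case 3
    have "subresultant 0 f g = Polynomial.smult ((-1) ^ ((degree f - 0) * (degree g - 0)) *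
        lead_coeff g ^ (degree f - degree H)) (subresultant 0 g H)"
      by (rule BT_lemma_1_12[OF FGH assms(2)]) (use dH 3 in auto)
    then show ?thesis
      by (simp add: subresultant_resultant)
  qed
  then show ?thesis
    unfolding H_def .
qed

lemma resultant_root_product_ge:
  fixes f g :: "complex poly"
  assumes "degree g \<le> degree f"
  shows "resultant f g = (-1) ^ (degree f * degree g) * root_resultant g f"
  using assms
proof (induction "degree g" arbitrary: f g rule: less_induct)
  case less
  show ?case
  proof (cases "degree g = 0")
    case True
    then obtain c where "g = [:c:]"
      by (metis degree_eq_zeroE)
    then show ?thesis
      by (simp add: root_resultant_def)
  next
    case False
    define H where "H = f mod g"
    have "g \<noteq> 0"
      using False by auto
    then have dH: "degree H < degree g"
      using degree_mod_less[of g f] False unfolding H_def by (cases "f mod g = 0") auto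
    have "resultant g H = (-1) ^ (degree g * degree H) * root_resultant H g"
      using less.hyps[OF dH] dH by simp
    also have "\<dots> = root_resultant g H"
      by (simp only: root_resultant_swap[of H g] mult.commute[of "degree H"] neg_one_power_cancel)
    finally have "resultant g H = root_resultant g H" .
    then show ?thesis
      using resultant_mod_step[OF _ less.prems] False root_resultant_mod[of g f]
      unfolding H_def by (simp add: algebra_simps)
  qed
qed

theorem resultant_root_product:
  fixes f g :: "complex poly"
  shows "resultant f g = root_resultant f g"
proof (cases "degree g \<le> degree f")
  case True
  then have "resultant f g = (-1) ^ (degree f * degree g) *
      ((-1) ^ (degree f * degree g) * root_resultant f g)"
    by (simp only: resultant_root_product_ge root_resultant_swap[of g f]
        mult.commute[of "degree g"])
  then show ?thesis
    by (simp only: neg_one_power_cancel)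
next
  case False
  then have "resultant g f = (-1) ^ (degree g * degree f) * root_resultant f g"
    by (intro resultant_root_product_ge) simp
  then show ?thesis
    by (simp only: resultant_swap[of f g] mult.commute[of "degree g"] neg_one_power_cancel)
qed

lemma resultant_of_int_poly:
  fixes p q :: "int poly"
  shows "(of_int (resultant p q) :: complex) = root_resultant (of_int_poly p) (of_int_poly q)"
  by (simp add: of_int_hom.resultant_hom[symmetric] resultant_root_product)

lemma int_poly_resultant_eq_0_if_common_root:
  fixes p q :: "int poly" and \<alpha> :: complex
  assumes "p \<noteq> 0" and "poly (of_int_poly p) \<alpha> = 0" and "poly (of_int_poly q) \<alpha> = 0"
  shows "resultant p q = 0"
proof -
  have "(of_int (resultant p q) :: complex) = 0"
    unfolding resultant_of_int_poly
    by (rule root_resultant_eq_0_if_common_root) (use assms in auto)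
  then show ?thesis
    by simp
qed

(* A vanishing resultant forces a nontrivial gcd; an irreducible p must then divide q. *)
lemma irreducible_dvd_if_resultant_eq_0:
  fixes p q :: "int poly"
  assumes "irreducible p" and "resultant p q = 0"
  shows "p dvd q"
proof -
  obtain k where pk: "p = gcd p q * k"
    by (meson dvd_def gcd_dvd1)
  have "\<not> is_unit (gcd p q)"
    using assms(2) by (auto simp: resultant_0_gcd is_unit_poly_iff)
  then have "is_unit k"
    using irreducibleD[OF assms(1) pk] by blast
  then show ?thesis
    using pk by (metis gcd_dvd2 mult_unit_dvd_iff)
qed

lemma irreducible_int_poly_common_root_unique:
  fixes p q :: "int poly" and \<alpha> :: complex
  assumes ip: "irreducible p" and iq: "irreducible q"
    and lp: "lead_coeff p > 0" and lq: "lead_coeff q > 0"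
    and rp: "poly (of_int_poly p) \<alpha> = 0" and rq: "poly (of_int_poly q) \<alpha> = 0"
  shows "p = q"
proof -
  have "resultant p q = 0"
    using ip rp rq by (intro int_poly_resultant_eq_0_if_common_root) auto
  then have "p dvd q"
    by (rule irreducible_dvd_if_resultant_eq_0[OF ip])
  then obtain m where qm: "q = p * m"
    by (meson dvd_def)
  have "is_unit m"
    using irreducibleD[OF iq qm] ip by (auto simp: irreducible_def)
  then obtain c where mc: "m = [:c:]" and "is_unit c"
    by (auto simp: is_unit_poly_iff)
  then have "c = 1 \<or> c = -1"
    by auto
  moreover have "lead_coeff q = lead_coeff p * c"
    using qm mc by (simp add: lead_coeff_mult)
  ultimately have "c = 1"
    using lp lq by (auto simp: mult_less_0_iff)
  then show ?thesis
    using qm mc by simp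
qed

lemma int_poly_root_has_irreducible_factor:
  fixes p :: "int poly" and \<alpha> :: complex
  assumes "p \<noteq> 0" and "poly (of_int_poly p) \<alpha> = 0"
  obtains q where "irreducible q" and "q dvd p" and "poly (of_int_poly q) \<alpha> = 0"
proof -
  have "p dvd normalize (prod_mset (prime_factorization p))"
    unfolding prod_mset_prime_factorization_weak[OF assms(1)] by simp
  then have "p dvd prod_mset (prime_factorization p)"
    by simp
  then obtain k where k: "prod_mset (prime_factorization p) = p * k"
    by (meson dvd_def)
  have poly_prod:
    "poly (of_int_poly (prod_mset A)) \<alpha> = (\<Prod>q\<in>#A. poly (of_int_poly q) \<alpha>)"
    for A :: "int poly multiset"
    by (induction A) (simp_all add: of_int_poly_hom.hom_mult)
  have "poly (of_int_poly (prod_mset (prime_factorization p))) \<alpha> = 0"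
    unfolding k using assms(2) by (simp add: of_int_poly_hom.hom_mult)
  then obtain q where q: "q \<in># prime_factorization p" and rq: "poly (of_int_poly q) \<alpha> = 0"
    unfolding poly_prod by (auto simp: prod_mset_zero_iff)
  have "irreducible q"
    using in_prime_factors_imp_prime[OF q] by (simp add: prime_def prime_elem_imp_irreducible)
  moreover have "q dvd p"
    using q by (rule in_prime_factors_imp_dvd)
  ultimately show ?thesis
    using rq that by blast
qed

lemma min_int_poly_exists:
  fixes \<alpha> :: complex
  assumes "algebraic \<alpha>"
  shows "\<exists>p. irreducible p \<and> lead_coeff p > 0 \<and> poly (of_int_poly p) \<alpha> = 0"
proof -
  obtain p :: "int poly" where p: "p \<noteq> 0" "poly (of_int_poly p) \<alpha> = 0"
    using assms by (erule algebraicE')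
  obtain q where iq: "irreducible q" and rq: "poly (of_int_poly q) \<alpha> = 0"
    using int_poly_root_has_irreducible_factor[OF p] by blast
  show ?thesis
  proof (cases "lead_coeff q > 0")
    case True
    then show ?thesis
      using iq rq by blast
  next
    case False
    have "q \<noteq> 0"
      using iq by auto
    with False have neg: "lead_coeff q < 0"
      by (metis leading_coeff_0_iff linorder_neqE_linordered_idom)
    have "irreducible (q * [:-1:])"
      using iq by (subst irreducible_mult_unit_right) (auto simp: is_unit_poly_iff)
    moreover have "lead_coeff (q * [:-1:]) > 0"
      using neg by (simp add: lead_coeff_mult)
    moreover have "poly (of_int_poly (q * [:-1:])) \<alpha> = 0"
      using rq by (simp add: of_int_poly_hom.hom_uminus)
    ultimately show ?thesis
      by blast
  qed
qed

lemma min_int_poly: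
  fixes \<alpha> :: complex
  assumes "algebraic \<alpha>"
  shows "irreducible (min_int_poly \<alpha>)" and "lead_coeff (min_int_poly \<alpha>) > 0"
    and "poly (of_int_poly (min_int_poly \<alpha>)) \<alpha> = 0"
proof -
  have "\<exists>!p. irreducible p \<and> lead_coeff p > 0 \<and> poly (of_int_poly p) \<alpha> = 0"
    using min_int_poly_exists[OF assms] irreducible_int_poly_common_root_unique by blast
  then have "irreducible (min_int_poly \<alpha>) \<and> lead_coeff (min_int_poly \<alpha>) > 0 \<and>
      poly (of_int_poly (min_int_poly \<alpha>)) \<alpha> = 0"
    unfolding min_int_poly_def by (rule theI')
  then show "irreducible (min_int_poly \<alpha>)" and "lead_coeff (min_int_poly \<alpha>) > 0"
    and "poly (of_int_poly (min_int_poly \<alpha>)) \<alpha> = 0"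
    by auto
qed

(* Expanding the Sylvester determinant along the first column: if lc(p) divides lc(q),
   every entry of that column is divisible by lc(p), hence so is the resultant. *)
lemma lead_coeff_dvd_resultant:
  fixes p q :: "int poly"
  assumes dv: "lead_coeff p dvd lead_coeff q" and d: "0 < degree p + degree q"
  shows "lead_coeff p dvd resultant p q"
proof -
  let ?N = "degree p + degree q"
  have "resultant p q = (\<Sum>i<?N. sylvester_mat p q $$ (i,0) * cofactor (sylvester_mat p q) i 0)"
    unfolding resultant_def by (rule laplace_expansion_column[OF sylvester_carrier_mat d])
  also have "lead_coeff p dvd \<dots>"
  proof (rule dvd_sum)
    fix i assume "i \<in> {..<?N}"
    then have i: "i < ?N"
      by simp
    have "lead_coeff p dvd sylvester_mat p q $$ (i,0)"
      unfolding sylvester_index_mat[OF i d] using dv by auto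
    then show "lead_coeff p dvd sylvester_mat p q $$ (i,0) * cofactor (sylvester_mat p q) i 0"
      by simp
  qed
  finally show ?thesis .
qed

(* In particular lc(p) divides res(p, p'), since lc(p') = deg(p) * lc(p). *)
lemma lead_coeff_dvd_resultant_pderiv:
  fixes p :: "int poly"
  assumes "0 < degree p"
  shows "lead_coeff p dvd resultant p (pderiv p)"
proof (rule lead_coeff_dvd_resultant)
  have "lead_coeff (pderiv p) = of_nat (degree p) * lead_coeff p"
    using assms by (simp add: degree_pderiv coeff_pderiv)
  then show "lead_coeff p dvd lead_coeff (pderiv p)"
    by simp
qed (use assms in simp)

lemma resultant_pderiv_nonzero:
  fixes p :: "int poly"
  assumes "irreducible p" and "0 < degree p"
  shows "resultant p (pderiv p) \<noteq> 0"
proof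
  assume "resultant p (pderiv p) = 0"
  then have "p dvd pderiv p"
    by (rule irreducible_dvd_if_resultant_eq_0[OF assms(1)])
  moreover have "pderiv p \<noteq> 0"
    using assms(2) by (simp add: pderiv_eq_0_iff)
  ultimately have "degree p \<le> degree (pderiv p)"
    by (rule dvd_imp_degree_le)
  with assms(2) show False
    by (simp add: degree_pderiv)
qed

lemma lead_coeff_le_abs_resultant_pderiv:
  fixes p :: "int poly"
  assumes "irreducible p" and "0 < degree p"
  shows "lead_coeff p \<le> \<bar>resultant p (pderiv p)\<bar>"
proof (rule zdvd_imp_le)
  show "lead_coeff p dvd \<bar>resultant p (pderiv p)\<bar>"
    using lead_coeff_dvd_resultant_pderiv[OF assms(2)] by simp
  show "0 < \<bar>resultant p (pderiv p)\<bar>"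
    using resultant_pderiv_nonzero[OF assms] by simp
qed

lemma norm_prod_mset_le:
  fixes f :: "'a \<Rightarrow> 'b::real_normed_field"
  assumes "\<And>x. x \<in># A \<Longrightarrow> norm (f x) \<le> c"
  shows "norm (\<Prod>x\<in>#A. f x) \<le> c ^ size A"
  using assms
proof (induction A)
  case empty
  then show ?case by simp
next
  case (add y A)
  have "norm (f y) \<le> c"
    using add.prems by simp
  then have "0 \<le> c"
    using norm_ge_zero order_trans by blast
  then show ?case
    using add by (simp add: norm_mult mult_mono)
qed

(* If all roots of f lie within delta of xi, then any two roots are within 2 delta, so
   |f'(b)| <= |lc f| (2 delta)^(n-1) at every root b and the root formula bounds res(f, f'). *)
lemma resultant_pderiv_norm_bound:
  fixes f :: "complex poly" and \<xi> :: complex and \<delta> :: real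
  assumes roots: "\<And>b. b \<in># proots f \<Longrightarrow> cmod (\<xi> - b) \<le> \<delta>"
  shows "cmod (resultant f (pderiv f)) \<le> cmod (lead_coeff f) ^ (degree f - 1) *
           (cmod (lead_coeff f) * (2 * \<delta>) ^ (degree f - 1)) ^ degree f"
proof -
  have deriv_bound:
    "cmod (poly (pderiv f) b) \<le> cmod (lead_coeff f) * (2 * \<delta>) ^ (degree f - 1)"
    if b: "b \<in># proots f" for b
  proof -
    have "cmod (\<Prod>a\<in>#proots f - {#b#}. b - a) \<le> (2 * \<delta>) ^ size (proots f - {#b#})"
    proof (rule norm_prod_mset_le)
      fix a assume "a \<in># proots f - {#b#}"
      then have "a \<in># proots f"
        by (rule in_diffD)
      have "cmod (b - a) \<le> cmod (\<xi> - b) + cmod (\<xi> - a)"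
        using norm_triangle_ineq4[of "\<xi> - a" "\<xi> - b"] by (simp add: norm_minus_commute)
      also have "\<dots> \<le> 2 * \<delta>"
        using roots[OF b] roots[OF \<open>a \<in># proots f\<close>] by simp
      finally show "cmod (b - a) \<le> 2 * \<delta>" .
    qed
    moreover have "size (proots f - {#b#}) = degree f - 1"
      using b by (simp add: size_Diff_singleton size_proots_complex)
    ultimately show ?thesis
      unfolding pderiv_at_root[OF b] norm_mult by (simp add: mult_left_mono)
  qed
  have "cmod (resultant f (pderiv f)) =
      cmod (lead_coeff f) ^ (degree f - 1) * cmod (\<Prod>b\<in>#proots f. poly (pderiv f) b)"
    by (simp add: resultant_root_product root_resultant_def degree_pderiv norm_mult norm_power)
  also have "\<dots> \<le> cmod (lead_coeff f) ^ (degree f - 1) *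
      (cmod (lead_coeff f) * (2 * \<delta>) ^ (degree f - 1)) ^ size (proots f)"
    by (intro mult_left_mono norm_prod_mset_le deriv_bound) simp_all
  finally show ?thesis
    by (simp add: size_proots_complex)
qed

lemma int_poly_resultant_pderiv_bound:
  fixes p :: "int poly" and \<xi> :: complex and \<delta> :: real
  assumes "\<And>b. b \<in># proots (of_int_poly p) \<Longrightarrow> cmod (\<xi> - b) \<le> \<delta>"
  shows "\<bar>real_of_int (resultant p (pderiv p))\<bar> \<le>
           \<bar>real_of_int (lead_coeff p)\<bar> ^ (degree p - 1) * (\<bar>real_of_int (lead_coeff p)\<bar> * (2 * \<delta>) ^ (degree p - 1)) ^ degree p"
proof -
  let ?pc = "of_int_poly p :: complex poly"
  have "resultant ?pc (pderiv ?pc) = of_int (resultant p (pderiv p))"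
    unfolding of_int_hom.map_poly_pderiv[symmetric] by (rule of_int_hom.resultant_hom)
  moreover have "lead_coeff ?pc = of_int (lead_coeff p)" and "degree ?pc = degree p"
    by simp_all
  ultimately show ?thesis
    using resultant_pderiv_norm_bound[of ?pc \<xi> \<delta>] assms by (simp only: norm_of_int)
qed

(* The final arithmetic: A <= A^(2n-1) d^(n(n-1)) means 1 <= (A^2 d^n)^(n-1), hence
   A^-2 <= d^n, i.e. A^(-2/n) <= d. *)
lemma powr_bound_from_discriminant_inequality:
  fixes A d :: real and n :: nat
  assumes A: "1 \<le> A" and d: "0 \<le> d" and n: "2 \<le> n"
    and ineq: "A \<le> A ^ (n - 1) * (A * d ^ (n - 1)) ^ n"
  shows "A powr (- 2 / real n) \<le> d"
proof -
  have exponent: "n - 1 + n = Suc (2 * (n - 1))"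
    using n by simp
  have "A ^ (n - 1) * (A * d ^ (n - 1)) ^ n = A ^ (n - 1 + n) * d ^ ((n - 1) * n)"
    by (simp add: power_mult_distrib power_add power_mult)
  also have "\<dots> = A * (A\<^sup>2 * d ^ n) ^ (n - 1)"
    unfolding exponent by (simp add: power_mult_distrib mult.commute flip: power_mult)
  finally have "A ^ (n - 1) * (A * d ^ (n - 1)) ^ n = A * (A\<^sup>2 * d ^ n) ^ (n - 1)" .
  with ineq A have "1 \<le> (A\<^sup>2 * d ^ n) ^ (n - 1)"
    by simp
  then have base: "1 \<le> A\<^sup>2 * d ^ n"
    using power_less_one_iff[of "A\<^sup>2 * d ^ n" "n - 1"] d n by (auto simp: not_le[symmetric])
  have "(A powr (- 2 / real n)) ^ n = A powr (real n * (- 2 / real n))"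
    using A by (intro powr_power) simp
  also have "\<dots> = inverse (A\<^sup>2)"
    using A n by (simp add: powr_minus powr_numeral)
  also have "\<dots> \<le> d ^ n"
    using A base by (simp add: field_simps)
  finally have "(A powr (- 2 / real n)) ^ Suc (n - 1) \<le> d ^ Suc (n - 1)"
    using n by simp
  then show ?thesis
    using d by (rule power_le_imp_le_base)
qed

lemma lead_coeff_le_height:
  "lead_coeff (min_int_poly \<alpha>) \<le> height \<alpha>"
proof -
  let ?p = "min_int_poly \<alpha>"
  have "\<bar>coeff ?p (degree ?p)\<bar> \<le> height \<alpha>"
    unfolding height_def by (rule Max_ge) auto
  then show ?thesis
    by simp
qed

lemma conjugates_eq_proots:
  fixes \<alpha> :: complex
  assumes "algebraic \<alpha>"
  shows "conjugates \<alpha> = set_mset (proots (of_int_poly (min_int_poly \<alpha>)))"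
proof -
  have "min_int_poly \<alpha> \<noteq> 0"
    using min_int_poly(1)[OF assms] by auto
  then show ?thesis
    unfolding conjugates_def by auto
qed

lemma root_in_proots_min_int_poly:
  fixes \<alpha> :: complex
  assumes "algebraic \<alpha>"
  shows "\<alpha> \<in># proots (of_int_poly (min_int_poly \<alpha>))"
  using min_int_poly[OF assms] by auto

lemma dist_root_le_Max_conjugates:
  fixes \<alpha> z b :: complex
  assumes "algebraic \<alpha>" and "b \<in># proots (of_int_poly (min_int_poly \<alpha>))"
  shows "cmod (z - b) \<le> Max ((\<lambda>\<beta>. cmod (z - \<beta>)) ` conjugates \<alpha>)"
  using assms by (auto simp: conjugates_eq_proots intro!: Max_ge)

theorem mainTheorem6:
  fixes n :: nat and \<xi> :: real and \<alpha> :: complex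
  assumes "n \<ge> 2" and "algebraic \<alpha>" and "alg_degree \<alpha> = n"
  shows "Max ((\<lambda>\<beta>. cmod (complex_of_real \<xi> - \<beta>)) ` conjugates \<alpha>)
           \<ge> 1/2 * (real_of_int (height \<alpha>)) powr (- 2 / real n)"
proof -
  define P where "P = min_int_poly \<alpha>"
  define a where "a = lead_coeff P"
  define \<delta> where "\<delta> = Max ((\<lambda>\<beta>. cmod (complex_of_real \<xi> - \<beta>)) ` conjugates \<alpha>)"
  have irr: "irreducible P" and a: "0 < a" and deg: "degree P = n"
    using min_int_poly[OF assms(2)] assms(3) unfolding P_def a_def alg_degree_def by auto
  have roots: "cmod (complex_of_real \<xi> - b) \<le> \<delta>" if "b \<in># proots (of_int_poly P)" for b
    using dist_root_le_Max_conjugates[OF assms(2)] that unfolding \<delta>_def P_def .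
  have "0 \<le> \<delta>"
    using roots[OF root_in_proots_min_int_poly[OF assms(2), folded P_def]] norm_ge_zero
    by (rule order_trans[rotated])
  have upper:
    "\<bar>real_of_int (resultant P (pderiv P))\<bar> \<le> a ^ (n - 1) * (a * (2 * \<delta>) ^ (n - 1)) ^ n"
    using int_poly_resultant_pderiv_bound[of P "complex_of_real \<xi>" \<delta>, OF roots] a deg
    unfolding a_def by simp
  have lower: "a \<le> \<bar>resultant P (pderiv P)\<bar>"
    using lead_coeff_le_abs_resultant_pderiv[OF irr] deg assms(1) unfolding a_def by simp
  have "real_of_int a powr (- 2 / real n) \<le> 2 * \<delta>"
    using a \<open>0 \<le> \<delta>\<close> assms(1) upper lower
    by (intro powr_bound_from_discriminant_inequality) auto
  moreover have
    "real_of_int (height \<alpha>) powr (- 2 / real n) \<le> real_of_int a powr (- 2 / real n)"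
    using a lead_coeff_le_height[of \<alpha>] unfolding a_def P_def by (intro powr_mono2') auto
  ultimately show ?thesis
    unfolding \<delta>_def by simp
qed

end
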